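(* Under the standing assumptions of the context, there are constants $0<\tilde c_0\le1\le\tilde c$ such that for every $\ell\ge1$ and every $n\ge2$ with $\mathcal K_\ell\cap[1,n)^2\ne\emptyset$, \[ \frac{\tilde c_0}{\ell^2}\le\delta_\ell(n)\le\frac{\tilde c}{\ell^2},\qquad\text{where }\ \delta_\ell(n)=\frac{\#(\mathcal K_\ell\cap[1,n)^2)}{n^2-n}. \]
   Context: Standing assumptions: $A=\{0,1\}$, $\Sigma=A^{\mathbb N_0}$ with metric $\rho(y,z)=2^{-\min\{i\ge0:\,y_i\ne z_i\}}$ ($y\ne z$) and shift $\sigma$. $\zeta:A\to A^*$ is a binary substitution of constant length $q\ge2$ ($|\zeta(0)|=|\zeta(1)|=q$, extended to words and sequences by concatenation), which is primitive (for some $k$, every letter occurs in $\zeta^k(a)$ for all $a$), aperiodic (the subshift $X_\zeta$ of all sequences whose finite subwords are subwords of some $\zeta^k(a)$ contains a non-$\sigma$-periodic sequence), and such that $\zeta(0)$ starts with $0$; $x=\lim_k\zeta^k(0)$ is the unique fixed point of $\zeta$ starting with $0$. Recurrence plot $R(x,\infty,1/2)$: the matrix indexed by $i,j\in\mathbb N_0$ with entry $1$ iff $x_i=x_j$ (i.e. $\rho(\sigma^ix,\sigma^jx)\le1/2$). A line of length $\ell$ in it is $(i,j,\ell)$ with $i\ne j$, entries $(i+k,j+k)=1$ for $0\le k<\ell$, entry $(i-1,j-1)=0$ if $\min\{i,j\}>0$, and entry $(i+\ell,j+\ell)=0$; it is inner if $\min\{i,j\}>0$. $\mathcal K_\ell=\{(i,j)\in\mathbb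 N^2:(i,j,\ell)\text{ is an inner line in }R(x,\infty,1/2)\}$, $\mathbb N$ the positive integers, $[1,n)=\{1,\dots,n-1\}$. *)

theory Defs
  imports Complex_Main
begin

text \<open>Letters of the alphabet A = {0,1} are the naturals 0 and 1; a substitution is
  a map zeta :: nat => nat list (only its values on 0 and 1 matter).\<close>

definition subst_word :: "(nat \<Rightarrow> nat list) \<Rightarrow> nat list \<Rightarrow> nat list" where
  "subst_word \<zeta> w = concat (map \<zeta> w)"

definition subst_iter :: "(nat \<Rightarrow> nat list) \<Rightarrow> nat \<Rightarrow> nat \<Rightarrow> nat list" where
  "subst_iter \<zeta> k a = (subst_word \<zeta> ^^ k) [a]"

definition is_factor :: "nat list \<Rightarrow> nat list \<Rightarrow> bool" where
  "is_factor w s \<longleftrightarrow> (\<exists>u v. s = u @ w @ v)"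

definition binary_subst :: "(nat \<Rightarrow> nat list) \<Rightarrow> bool" where
  "binary_subst \<zeta> \<longleftrightarrow> (\<forall>a\<in>{0,1}. set (\<zeta> a) \<subseteq> {0,1})"

definition const_length :: "(nat \<Rightarrow> nat list) \<Rightarrow> nat \<Rightarrow> bool" where
  "const_length \<zeta> q \<longleftrightarrow> length (\<zeta> 0) = q \<and> length (\<zeta> 1) = q"

definition primitive_subst :: "(nat \<Rightarrow> nat list) \<Rightarrow> bool" where
  "primitive_subst \<zeta> \<longleftrightarrow> (\<exists>k. \<forall>a\<in>{0,1}. \<forall>b\<in>{0,1}. b \<in> set (subst_iter \<zeta> k a))"

definition subshift :: "(nat \<Rightarrow> nat list) \<Rightarrow> (nat \<Rightarrow> nat) set" where
  "subshift \<zeta> = {y. (\<forall>i. y i \<in> {0,1}) \<and>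
     (\<forall>i m. \<exists>k. \<exists>a\<in>{0,1}. is_factor (map y [i..<i+m]) (subst_iter \<zeta> k a))}"

definition shift_periodic :: "(nat \<Rightarrow> nat) \<Rightarrow> bool" where
  "shift_periodic y \<longleftrightarrow> (\<exists>p>0. \<forall>i. y (i + p) = y i)"

definition aperiodic_subst :: "(nat \<Rightarrow> nat list) \<Rightarrow> bool" where
  "aperiodic_subst \<zeta> \<longleftrightarrow> (\<exists>y\<in>subshift \<zeta>. \<not> shift_periodic y)"

definition is_fixpoint_limit :: "(nat \<Rightarrow> nat list) \<Rightarrow> (nat \<Rightarrow> nat) \<Rightarrow> bool" where
  "is_fixpoint_limit \<zeta> x \<longleftrightarrow>
     (\<forall>k i. i < length (subst_iter \<zeta> k 0) \<longrightarrow> x i = subst_iter \<zeta> k 0 ! i)"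

text \<open>Line (i,j,l) in the recurrence plot R(x,infinity,1/2), entry (i,j) = 1 iff x i = x j.\<close>
definition rp_line :: "(nat \<Rightarrow> nat) \<Rightarrow> nat \<Rightarrow> nat \<Rightarrow> nat \<Rightarrow> bool" where
  "rp_line x i j l \<longleftrightarrow> i \<noteq> j \<and> (\<forall>k<l. x (i + k) = x (j + k)) \<and>
     (min i j > 0 \<longrightarrow> x (i - 1) \<noteq> x (j - 1)) \<and> x (i + l) \<noteq> x (j + l)"

definition inner_lines :: "(nat \<Rightarrow> nat) \<Rightarrow> nat \<Rightarrow> (nat \<times> nat) set" where
  "inner_lines x l = {(i, j). i > 0 \<and> j > 0 \<and> rp_line x i j l}"

definition line_density :: "(nat \<Rightarrow> nat) \<Rightarrow> nat \<Rightarrow> nat \<Rightarrow> real" where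
  "line_density x l n =
     real (card (inner_lines x l \<inter> ({1..<n} \<times> {1..<n}))) / (real n ^ 2 - real n)"

end

theory Submission
  imports Defs
begin

text \<open>The fixed point x is linearly recurrent: a factor of length m \<le> q^k of x lies in the
  image under \<zeta>^k of a two-letter factor, and by primitivity every two-letter factor of x occurs
  in \<zeta>^P(a) for every letter a, so each factor of length m recurs in every window of length C m.
  Together with aperiodicity this gives repulsion: two occurrences of a common factor of length L
  lie more than L / (2 C) apart.

  A line (i, j, l) is determined by the factors of length l + 2 starting at i - 1 and j - 1. Each
  of them recurs about n / (C l) times below n, which gives the lower bound of order n^2 / l^2.
  For the upper bound, cut [1, n)^2 into boxes of side about l / (4 C + 1): by repulsion each box
  contains at most one line, and lines exist at all only if l < 2 C n.\<close>

section \<open>Substitutions of constant length\<close>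

lemma subst_word_append [simp]: "subst_word \<zeta> (u @ v) = subst_word \<zeta> u @ subst_word \<zeta> v"
  by (simp add: subst_word_def)

lemma funpow_subst_word_append:
  "(subst_word \<zeta> ^^ k) (u @ v) = (subst_word \<zeta> ^^ k) u @ (subst_word \<zeta> ^^ k) v"
  by (induction k arbitrary: u v) auto

lemma subst_iter_add: "subst_iter \<zeta> (m + k) a = (subst_word \<zeta> ^^ m) (subst_iter \<zeta> k a)"
  by (simp add: subst_iter_def funpow_add)

lemma is_factor_trans: "is_factor u v \<Longrightarrow> is_factor v w \<Longrightarrow> is_factor u w"
  unfolding is_factor_def by (metis append.assoc)

lemma is_factor_take_drop: "is_factor (take j (drop t w)) w"
  unfolding is_factor_def by (metis append_take_drop_id)

lemma is_factor_singleton_iff: "is_factor [a] w \<longleftrightarrow> a \<in> set w"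
  by (auto simp: is_factor_def in_set_conv_decomp)

lemma is_factor_subst_iter_compose:
  assumes "is_factor [b] (subst_iter \<zeta> k a)" and "is_factor v (subst_iter \<zeta> m b)"
  shows "is_factor v (subst_iter \<zeta> (m + k) a)"
proof -
  obtain u w where "subst_iter \<zeta> k a = u @ [b] @ w"
    using assms(1) by (auto simp: is_factor_def)
  then have "subst_iter \<zeta> (m + k) a =
      (subst_word \<zeta> ^^ m) u @ (subst_word \<zeta> ^^ m) [b] @ (subst_word \<zeta> ^^ m) w"
    by (simp only: subst_iter_add funpow_subst_word_append)
  then have "is_factor (subst_iter \<zeta> m b) (subst_iter \<zeta> (m + k) a)"
    unfolding is_factor_def subst_iter_def[of \<zeta> m b] by blast
  then show ?thesis
    using assms(2) is_factor_trans by blast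
qed

locale const_length_binary_subst =
  fixes \<zeta> :: "nat \<Rightarrow> nat list" and q :: nat
  assumes binary: "binary_subst \<zeta>" and q_ge_2: "2 \<le> q" and const_length: "const_length \<zeta> q"
begin

lemma subst_word_binary:
  "set w \<subseteq> {0,1} \<Longrightarrow> set (subst_word \<zeta> w) \<subseteq> {0,1} \<and> length (subst_word \<zeta> w) = q * length w"
proof (induction w)
  case (Cons a w)
  then have "set (\<zeta> a) \<subseteq> {0,1}" "length (\<zeta> a) = q"
    using binary const_length by (auto simp: binary_subst_def const_length_def)
  with Cons show ?case
    by (simp add: subst_word_def)
qed (simp add: subst_word_def)

lemma funpow_subst_word_binary:
  "set w \<subseteq> {0,1} \<Longrightarrow>
    set ((subst_word \<zeta> ^^ k) w) \<subseteq> {0,1} \<and> length ((subst_word \<zeta> ^^ k) w) = q ^ k * length w"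
proof (induction k)
  case (Suc k)
  then show ?case using subst_word_binary[of "(subst_word \<zeta> ^^ k) w"] by simp
qed simp

lemma length_subst_iter: "a \<in> {0,1} \<Longrightarrow> length (subst_iter \<zeta> k a) = q ^ k"
  using funpow_subst_word_binary[of "[a]" k] by (simp add: subst_iter_def)

lemma set_subst_iter: "a \<in> {0,1} \<Longrightarrow> set (subst_iter \<zeta> k a) \<subseteq> {0,1}"
  using funpow_subst_word_binary[of "[a]" k] by (simp add: subst_iter_def)

lemma nth_funpow_subst_word_factor:
  assumes "set u \<subseteq> {0,1}" and "set v \<subseteq> {0,1}" and "c < q ^ k * length v"
  shows "(subst_word \<zeta> ^^ k) (u @ v @ w) ! (q ^ k * length u + c) = (subst_word \<zeta> ^^ k) v ! c"
proof -
  let ?f = "subst_word \<zeta> ^^ k"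
  have "length (?f u) = q ^ k * length u" and "c < length (?f v)"
    using funpow_subst_word_binary[OF assms(1)] funpow_subst_word_binary[OF assms(2)] assms(3)
    by simp_all
  then show ?thesis
    unfolding funpow_subst_word_append by (metis nth_append nth_append_length_plus)
qed

lemma less_q_power: "t < q ^ t"
proof -
  have "t < 2 ^ t" by (rule less_exp)
  also have "\<dots> \<le> q ^ t" using q_ge_2 by (simp add: power_mono)
  finally show ?thesis .
qed

lemma q_power_bracket:
  assumes "0 < m"
  obtains k where "m \<le> q ^ k" and "q ^ k \<le> q * m"
proof -
  define k where "k = (LEAST k. m \<le> q ^ k)"
  have "\<exists>k. m \<le> q ^ k"
    using less_q_power[of m] less_imp_le by blast
  then have "m \<le> q ^ k"
    unfolding k_def by (rule LeastI_ex)
  moreover have "q ^ k \<le> q * m"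
  proof (cases k)
    case (Suc k')
    then have "\<not> m \<le> q ^ k'"
      unfolding k_def by (intro not_less_Least) simp
    with Suc show ?thesis by simp
  qed (use assms q_ge_2 in simp)
  ultimately show ?thesis using that by blast
qed

end

section \<open>Recurrence plots of linearly recurrent sequences\<close>

definition linearly_recurrent :: "(nat \<Rightarrow> nat) \<Rightarrow> nat \<Rightarrow> bool" where
  "linearly_recurrent x C \<longleftrightarrow>
     (\<forall>m t s. 0 < m \<longrightarrow> (\<exists>u. s \<le> u \<and> u + m \<le> s + C * m \<and> (\<forall>r<m. x (u + r) = x (t + r))))"

lemma linearly_recurrentD:
  assumes "linearly_recurrent x C" and "0 < m"
  obtains u where "s \<le> u" and "u + m \<le> s + C * m" and "\<forall>r<m. x (u + r) = x (t + r)"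
  using assms unfolding linearly_recurrent_def by blast

lemma linearly_recurrent_ge_1: "linearly_recurrent x C \<Longrightarrow> 1 \<le> C"
  by (erule linearly_recurrentD[of _ _ 1 0 0]) auto

text \<open>A long overlap of x with its shift by D contains, by linear recurrence, a copy of every
  factor of length D + 1, which would make x D-periodic.\<close>
lemma linearly_recurrent_repulsion:
  assumes lr: "linearly_recurrent x C" and aper: "\<not> shift_periodic x" and "0 < D"
    and overlap: "\<forall>r<L. x (p + r) = x (p + D + r)"
  shows "L < 2 * C * D"
proof (rule ccontr)
  assume "\<not> L < 2 * C * D"
  then have "2 * (C * D) \<le> L"
    by (simp add: mult.assoc)
  moreover have "C \<le> C * D"
    using \<open>0 < D\<close> by simp
  ultimately have "C * (D + 1) \<le> L + D"
    unfolding distrib_left mult_1_right by linarith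
  have "x (t + D) = x t" for t
  proof -
    obtain u where u: "p \<le> u" "u + (D + 1) \<le> p + C * (D + 1)"
      and copy: "\<forall>r<D + 1. x (u + r) = x (t + r)"
      using linearly_recurrentD[OF lr, of "D + 1" p t] by auto
    have "u - p < L"
      using u \<open>C * (D + 1) \<le> L + D\<close> by linarith
    then have "x u = x (u + D)"
      using overlap[rule_format, of "u - p"] u(1) by (simp add: algebra_simps)
    then show ?thesis
      using copy[rule_format, of 0] copy[rule_format, of D] by simp
  qed
  then show False
    using aper \<open>0 < D\<close> unfolding shift_periodic_def by blast
qed

lemma linearly_recurrent_occurrences:
  assumes lr: "linearly_recurrent x C" and "0 < m" and "b * (C * m) \<le> n"
  shows "b \<le> card {p. p < n \<and> (\<forall>r<m. x (p + r) = x (t + r))}"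
proof -
  have "\<forall>a. \<exists>u. a * (C * m) \<le> u \<and> u + m \<le> a * (C * m) + C * m \<and> (\<forall>r<m. x (u + r) = x (t + r))"
    using linearly_recurrentD[OF lr \<open>0 < m\<close>] by metis
  then obtain g where g_lo: "\<And>a. a * (C * m) \<le> g a"
    and g_hi: "\<And>a. g a + m \<le> a * (C * m) + C * m"
    and g_occ: "\<And>a. \<forall>r<m. x (g a + r) = x (t + r)"
    by metis
  have "g a div (C * m) = a" for a
    using g_lo[of a] g_hi[of a] \<open>0 < m\<close> by (intro div_nat_eqI) (simp_all add: algebra_simps)
  then have "inj_on g {..<b}"
    by (metis inj_onI)
  moreover have "g ` {..<b} \<subseteq> {p. p < n \<and> (\<forall>r<m. x (p + r) = x (t + r))}"
  proof (intro image_subsetI CollectI conjI)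
    fix a assume "a \<in> {..<b}"
    then have "a * (C * m) + C * m \<le> b * (C * m)"
      using mult_le_mono1[of "Suc a" b "C * m"] by simp
    then show "g a < n"
      using g_hi[of a] \<open>0 < m\<close> \<open>b * (C * m) \<le> n\<close> by linarith
  qed (rule g_occ)
  ultimately show ?thesis
    using card_inj_on_le[of g "{..<b}"] by simp
qed

lemma inner_line_from_occurrences:
  assumes "(i, j) \<in> inner_lines x l"
    and "\<forall>r<l + 2. x (p + r) = x (i - 1 + r)" and "\<forall>r<l + 2. x (p' + r) = x (j - 1 + r)"
  shows "(Suc p, Suc p') \<in> inner_lines x l"
proof -
  have ij: "0 < i" "0 < j" "\<forall>k<l. x (i + k) = x (j + k)" "x (i - 1) \<noteq> x (j - 1)"
    "x (i + l) \<noteq> x (j + l)"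
    using assms(1) by (auto simp: inner_lines_def rp_line_def)
  have start: "x p = x (i - 1)" "x p' = x (j - 1)"
    using assms(2,3) by (metis add_0_right zero_less_numeral trans_less_add2)+
  have "x (Suc p + k) = x (i + k)" and "x (Suc p' + k) = x (j + k)" if "k \<le> l" for k
    using assms(2)[rule_format, of "Suc k"] assms(3)[rule_format, of "Suc k"] ij(1,2) that by simp_all
  with ij start show ?thesis
    unfolding inner_lines_def rp_line_def by auto
qed

lemma inner_lines_card_lower:
  assumes lr: "linearly_recurrent x C" and "1 \<le> l" and "2 \<le> n"
    and ij: "(i, j) \<in> inner_lines x l \<inter> ({1..<n} \<times> {1..<n})"
  shows "n * (n - 1) \<le> 72 * C\<^sup>2 * l\<^sup>2 * card (inner_lines x l \<inter> ({1..<n} \<times> {1..<n}))"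
proof -
  define S where "S = inner_lines x l \<inter> ({1..<n} \<times> {1..<n})"
  define occ where "occ i = {p. p < n - 1 \<and> (\<forall>r<l + 2. x (p + r) = x (i - 1 + r))}" for i
  define b where "b = max 1 ((n - 1) div (C * (l + 2)))"
  have C: "1 \<le> C"
    using lr by (rule linearly_recurrent_ge_1)
  have occ_card: "b \<le> card (occ i)" if "i \<in> {1..<n}" for i
  proof -
    have "(n - 1) div (C * (l + 2)) \<le> card (occ i)"
      unfolding occ_def by (rule linearly_recurrent_occurrences[OF lr]) simp_all
    moreover have "i - 1 \<in> occ i" and "finite (occ i)"
      using that unfolding occ_def by auto
    then have "1 \<le> card (occ i)"
      by (metis One_nat_def Suc_leI card_gt_0_iff empty_iff)
    ultimately show ?thesis
      unfolding b_def by simp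
  qed
  have "(\<lambda>(p, p'). (Suc p, Suc p')) ` (occ i \<times> occ j) \<subseteq> S"
    using ij inner_line_from_occurrences[of i j x l] unfolding S_def occ_def by auto
  then have "card (occ i \<times> occ j) \<le> card S"
    unfolding S_def by (intro card_inj_on_le[of "\<lambda>(p, p'). (Suc p, Suc p')"]) (auto intro: inj_onI)
  then have "b * b \<le> card S"
    using occ_card ij mult_le_mono[of b "card (occ i)" b "card (occ j)"] by (simp add: card_cartesian_product)
  have "n - 1 < ((n - 1) div (C * (l + 2)) + 1) * (C * (l + 2))"
    using C by (simp add: dividend_less_div_times)
  also have "\<dots> \<le> 2 * b * (C * (3 * l))"
    using \<open>1 \<le> l\<close> unfolding b_def by (intro mult_le_mono) simp_all
  finally have "n - 1 \<le> 6 * b * C * l"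
    by (simp add: algebra_simps)
  have "n * (n - 1) \<le> 2 * (n - 1) * (n - 1)"
    using \<open>2 \<le> n\<close> by (intro mult_le_mono1) simp
  also have "\<dots> \<le> 2 * (6 * b * C * l) * (6 * b * C * l)"
    using \<open>n - 1 \<le> 6 * b * C * l\<close> by (intro mult_le_mono) simp_all
  also have "\<dots> = 72 * C\<^sup>2 * l\<^sup>2 * (b * b)"
    by (simp add: power2_eq_square algebra_simps)
  also have "\<dots> \<le> 72 * C\<^sup>2 * l\<^sup>2 * card S"
    using \<open>b * b \<le> card S\<close> by simp
  finally show ?thesis
    unfolding S_def .
qed

text \<open>On a common diagonal the later line would extend the earlier one to the left; on different
  diagonals their overlap, of length more than l - h, violates repulsion.\<close>
lemma inner_lines_eq_if_close:
  assumes lr: "linearly_recurrent x C" and aper: "\<not> shift_periodic x"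
    and line: "(i, j) \<in> inner_lines x l" and line': "(i', j') \<in> inner_lines x l"
    and "i \<le> i'" "i' < i + h" "j < j' + h" "j' < j + h" and "(4 * C + 1) * h \<le> l"
  shows "(i, j) = (i', j')"
proof (rule ccontr)
  assume ne: "(i, j) \<noteq> (i', j')"
  define a where "a = i' - i"
  have "a < h" "h \<le> l"
    using assms(5-9) unfolding a_def by (simp_all add: le_trans[OF _ assms(9)])
  have agree: "\<forall>k<l. x (i + k) = x (j + k)" and agree': "\<forall>k<l. x (i' + k) = x (j' + k)"
    and "0 < i'" "0 < j'" and left': "x (i' - 1) \<noteq> x (j' - 1)"
    using line line' by (auto simp: inner_lines_def rp_line_def)
  have overlap: "x (j + a + r) = x (j' + r)" if "r < l - a" for r
    using agree[rule_format, of "a + r"] agree'[rule_format, of r] that \<open>i \<le> i'\<close>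
    unfolding a_def by (simp add: algebra_simps)
  consider "j + a = j'" | "j + a < j'" | "j' < j + a"
    by linarith
  then show False
  proof cases
    case 1
    then have "0 < a"
      using ne \<open>i \<le> i'\<close> unfolding a_def by auto
    then have "x (i + (a - 1)) = x (j + (a - 1))"
      using agree[rule_format, of "a - 1"] \<open>a < h\<close> \<open>h \<le> l\<close> by linarith
    moreover have "i + (a - 1) = i' - 1" and "j + (a - 1) = j' - 1"
      using 1 \<open>0 < a\<close> unfolding a_def by simp_all
    ultimately show False
      using left' by simp
  next
    case 2
    then have "\<forall>r<l - a. x (j + a + r) = x (j + a + (j' - (j + a)) + r)"
      using overlap by simp
    then have "l - a < 2 * C * (j' - (j + a))"
      by (rule linearly_recurrent_repulsion[OF lr aper, rotated]) (use 2 in simp)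
    also have "\<dots> \<le> 2 * C * (2 * h)"
      using assms(8) by (intro mult_le_mono2) simp
    finally show False
      using \<open>a < h\<close> assms(9) by (simp add: algebra_simps)
  next
    case 3
    then have "\<forall>r<l - a. x (j' + r) = x (j' + (j + a - j') + r)"
      using overlap by simp
    then have "l - a < 2 * C * (j + a - j')"
      by (rule linearly_recurrent_repulsion[OF lr aper, rotated]) (use 3 in simp)
    also have "\<dots> \<le> 2 * C * (2 * h)"
      using assms(7) \<open>a < h\<close> by (intro mult_le_mono2) simp
    finally show False
      using \<open>a < h\<close> assms(9) by (simp add: algebra_simps)
  qed
qed

lemma inner_line_length_bound:
  assumes lr: "linearly_recurrent x C" and aper: "\<not> shift_periodic x"
    and ij: "(i, j) \<in> inner_lines x l \<inter> ({1..<n} \<times> {1..<n})"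
  shows "l < 2 * C * (n - 2)"
proof -
  have "i \<noteq> j" and agree: "\<forall>k<l. x (i + k) = x (j + k)" and bounds: "1 \<le> i" "1 \<le> j" "i < n" "j < n"
    using ij by (auto simp: inner_lines_def rp_line_def)
  then consider "i < j" | "j < i"
    by linarith
  then show ?thesis
  proof cases
    case 1
    have "\<forall>k<l. x (i + k) = x (i + (j - i) + k)"
      using agree 1 by simp
    then have "l < 2 * C * (j - i)"
      by (rule linearly_recurrent_repulsion[OF lr aper, rotated]) (use 1 in simp)
    also have "\<dots> \<le> 2 * C * (n - 2)"
      using bounds by (intro mult_le_mono2) simp
    finally show ?thesis .
  next
    case 2
    have "\<forall>k<l. x (j + k) = x (j + (i - j) + k)"
      using agree 2 by simp
    then have "l < 2 * C * (i - j)"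
      by (rule linearly_recurrent_repulsion[OF lr aper, rotated]) (use 2 in simp)
    also have "\<dots> \<le> 2 * C * (n - 2)"
      using bounds by (intro mult_le_mono2) simp
    finally show ?thesis .
  qed
qed

lemma inner_lines_card_le_boxes:
  assumes lr: "linearly_recurrent x C" and aper: "\<not> shift_periodic x"
    and "1 \<le> h" and "(4 * C + 1) * h \<le> l"
  shows "card (inner_lines x l \<inter> ({1..<n} \<times> {1..<n})) \<le> ((n - 2) div h + 1)\<^sup>2"
proof -
  define S where "S = inner_lines x l \<inter> ({1..<n} \<times> {1..<n})"
  define box where "box = (\<lambda>(i, j). ((i - 1) div h, (j - 1) div h))"
  have close: "a < b + h" if "(a - 1) div h = (b - 1) div h" "1 \<le> a" "1 \<le> b" for a b
  proof -
    have "a - 1 < h * ((a - 1) div h) + h"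
      using \<open>1 \<le> h\<close> mult_div_mod_eq[of h "a - 1"] mod_less_divisor[of h "a - 1"] by linarith
    moreover have "h * ((a - 1) div h) \<le> b - 1"
      unfolding that(1) by (rule times_div_less_eq_dividend)
    ultimately show ?thesis
      using that(2,3) by linarith
  qed
  have "inj_on box S"
  proof (rule inj_onI)
    fix p p' assume "p \<in> S" "p' \<in> S" "box p = box p'"
    then obtain i j i' j' where "p = (i, j)" "p' = (i', j')"
      and lines: "(i, j) \<in> inner_lines x l" "(i', j') \<in> inner_lines x l"
      and "1 \<le> i" "1 \<le> j" "1 \<le> i'" "1 \<le> j'"
      and "(i - 1) div h = (i' - 1) div h" "(j - 1) div h = (j' - 1) div h"
      unfolding S_def box_def by auto
    moreover from this have "i < i' + h" "i' < i + h" "j < j' + h" "j' < j + h"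
      using close by metis+
    ultimately show "p = p'"
      using inner_lines_eq_if_close[OF lr aper] assms(4) by (metis nat_le_linear)
  qed
  moreover have "box ` S \<subseteq> {..<(n - 2) div h + 1} \<times> {..<(n - 2) div h + 1}"
    unfolding S_def box_def by (auto simp: less_Suc_eq_le intro!: div_le_mono)
  ultimately have "card S \<le> card ({..<(n - 2) div h + 1} \<times> {..<(n - 2) div h + 1})"
    by (intro card_inj_on_le) simp_all
  then show ?thesis
    unfolding S_def by (simp add: card_cartesian_product power2_eq_square)
qed

lemma div_bracket:
  fixes d l :: nat
  assumes "0 < d" and "d \<le> l"
  shows "1 \<le> l div d" and "d * (l div d) \<le> l" and "l \<le> 2 * d * (l div d)"
proof -
  show "1 \<le> l div d"
    using assms div_le_mono[of d l d] by simp
  show "d * (l div d) \<le> l"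
    by (rule times_div_less_eq_dividend)
  have "l < d * (l div d) + d"
    using assms mult_div_mod_eq[of d l] mod_less_divisor[of d l] by linarith
  also have "\<dots> \<le> 2 * d * (l div d)"
    using mult_le_mono2[OF \<open>1 \<le> l div d\<close>, of d] by (simp add: algebra_simps)
  finally show "l \<le> 2 * d * (l div d)"
    by simp
qed

lemma inner_lines_card_upper_long:
  assumes lr: "linearly_recurrent x C" and aper: "\<not> shift_periodic x" and "4 * C < l"
    and ij: "(i, j) \<in> inner_lines x l \<inter> ({1..<n} \<times> {1..<n})"
  shows "card (inner_lines x l \<inter> ({1..<n} \<times> {1..<n})) * l\<^sup>2 \<le> (10 * C + 2)\<^sup>2 * (n * (n - 1))"
proof -
  define h where "h = l div (4 * C + 1)"
  define B where "B = (n - 2) div h + 1"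
  have "1 \<le> h" and h_le: "(4 * C + 1) * h \<le> l" and l_le: "l \<le> 2 * (4 * C + 1) * h"
    using div_bracket[of "4 * C + 1" l] \<open>4 * C < l\<close> unfolding h_def by simp_all
  have "B * l = (n - 2) div h * l + l"
    unfolding B_def by (simp add: algebra_simps)
  also have "\<dots> \<le> 2 * (4 * C + 1) * ((n - 2) div h * h) + 2 * C * (n - 2)"
    using inner_line_length_bound[OF lr aper ij] mult_le_mono2[OF l_le, of "(n - 2) div h"]
    by (simp add: algebra_simps)
  also have "\<dots> \<le> 2 * (4 * C + 1) * (n - 2) + 2 * C * (n - 2)"
    by (intro add_mono mult_le_mono2 div_times_less_eq_dividend le_refl)
  also have "\<dots> \<le> (10 * C + 2) * (n - 1)"
    by (simp add: algebra_simps)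
  finally have B: "B * l \<le> (10 * C + 2) * (n - 1)" .
  have "card (inner_lines x l \<inter> ({1..<n} \<times> {1..<n})) * l\<^sup>2 \<le> B\<^sup>2 * l\<^sup>2"
    unfolding B_def by (intro mult_le_mono1 inner_lines_card_le_boxes[OF lr aper \<open>1 \<le> h\<close> h_le])
  also have "\<dots> = (B * l)\<^sup>2"
    by (simp add: power_mult_distrib)
  also have "\<dots> \<le> ((10 * C + 2) * (n - 1))\<^sup>2"
    using B by (rule power_mono) simp
  also have "\<dots> = (10 * C + 2)\<^sup>2 * ((n - 1) * (n - 1))"
    by (simp only: power_mult_distrib power2_eq_square[of "n - 1"])
  also have "\<dots> \<le> (10 * C + 2)\<^sup>2 * (n * (n - 1))"
    by (intro mult_le_mono2 mult_le_mono1) simp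
  finally show ?thesis .
qed

lemma inner_lines_card_upper:
  assumes lr: "linearly_recurrent x C" and aper: "\<not> shift_periodic x"
  shows "card (inner_lines x l \<inter> ({1..<n} \<times> {1..<n})) * l\<^sup>2 \<le> (10 * C + 2)\<^sup>2 * (n * (n - 1))"
proof -
  define S where "S = inner_lines x l \<inter> ({1..<n} \<times> {1..<n})"
  consider "l \<le> 4 * C" | "S = {}" | i j where "4 * C < l" and "(i, j) \<in> S"
    by fastforce
  then show ?thesis
  proof cases
    case 1
    have "card S \<le> card ({1..<n} \<times> {1..<n})"
      unfolding S_def by (intro card_mono) auto
    then have "card S * l\<^sup>2 \<le> ((n - 1) * (n - 1)) * (4 * C)\<^sup>2"
      using 1 by (intro mult_le_mono power_mono) (simp_all add: card_cartesian_product)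
    also have "\<dots> \<le> (n * (n - 1)) * (10 * C + 2)\<^sup>2"
      by (intro mult_le_mono power_mono) simp_all
    finally show ?thesis
      unfolding S_def by (simp add: mult.commute)
  next
    case 2
    then show ?thesis
      unfolding S_def by simp
  next
    case 3
    then show ?thesis
      unfolding S_def by (rule inner_lines_card_upper_long[OF lr aper])
  qed
qed

lemma line_density_bounds:
  assumes lr: "linearly_recurrent x C" and aper: "\<not> shift_periodic x"
    and l: "1 \<le> l" and n: "2 \<le> n" and ij: "(i, j) \<in> inner_lines x l \<inter> ({1..<n} \<times> {1..<n})"
  shows "1 / (72 * real C ^ 2) / real l ^ 2 \<le> line_density x l n"
    and "line_density x l n \<le> real ((10 * C + 2) ^ 2) / real l ^ 2"
proof -
  define s where "s = card (inner_lines x l \<inter> ({1..<n} \<times> {1..<n}))"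
  define N where "N = n * (n - 1)"
  have "real N \<le> real (72 * C\<^sup>2 * l\<^sup>2 * s)"
    unfolding s_def N_def by (rule of_nat_mono[OF inner_lines_card_lower[OF lr l n ij]])
  then have lower: "real N \<le> 72 * real C ^ 2 * real l ^ 2 * real s"
    by simp
  have "real (s * l\<^sup>2) \<le> real ((10 * C + 2)\<^sup>2 * N)"
    unfolding s_def N_def by (rule of_nat_mono[OF inner_lines_card_upper[OF lr aper]])
  then have upper: "real s * real l ^ 2 \<le> real ((10 * C + 2) ^ 2) * real N"
    by simp
  have density: "line_density x l n = real s / real N"
    using n unfolding line_density_def s_def N_def
    by (simp add: power2_eq_square of_nat_diff algebra_simps)
  have "0 < real N" and "0 < real l" and "0 < real C"
    using l n linearly_recurrent_ge_1[OF lr] unfolding N_def by simp_all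
  then show "1 / (72 * real C ^ 2) / real l ^ 2 \<le> line_density x l n"
    and "line_density x l n \<le> real ((10 * C + 2) ^ 2) / real l ^ 2"
    using lower upper unfolding density by (simp_all add: field_simps)
qed

section \<open>The fixed point of a primitive substitution\<close>

locale primitive_fixpoint = const_length_binary_subst +
  fixes x :: "nat \<Rightarrow> nat"
  assumes primitive: "primitive_subst \<zeta>" and fixpoint: "is_fixpoint_limit \<zeta> x"
begin

lemma fixpoint_nth: "i < q ^ k \<Longrightarrow> x i = subst_iter \<zeta> k 0 ! i"
  using fixpoint length_subst_iter[of 0 k] by (simp add: is_fixpoint_limit_def)

lemma fixpoint_binary: "x i \<in> {0,1}"
proof -
  have "i < length (subst_iter \<zeta> i 0)"
    using less_q_power[of i] length_subst_iter[of 0 i] by simp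
  then have "x i \<in> set (subst_iter \<zeta> i 0)"
    using fixpoint_nth[OF less_q_power] by simp
  then show ?thesis
    using set_subst_iter[OF insertI1] by blast
qed

lemma fixpoint_0: "x 0 = 0"
  using fixpoint_nth[of 0 0] by (simp add: subst_iter_def)

lemma set_map_fixpoint: "set (map x ns) \<subseteq> {0,1}"
  unfolding set_map using fixpoint_binary by (rule image_subsetI)

lemma take_drop_subst_iter_fixpoint:
  "t + j \<le> q ^ M \<Longrightarrow> take j (drop t (subst_iter \<zeta> M 0)) = map x [t..<t + j]"
proof (rule nth_equalityI)
  fix i assume "t + j \<le> q ^ M" and "i < length (take j (drop t (subst_iter \<zeta> M 0)))"
  then have "i < j" and "t + i < q ^ M"
    by (simp_all add: length_subst_iter)
  then show "take j (drop t (subst_iter \<zeta> M 0)) ! i = map x [t..<t + j] ! i"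
    using fixpoint_nth[of "t + i" M] by (simp add: length_subst_iter nth_drop)
qed (simp add: length_subst_iter)

lemma fixpoint_block:
  assumes "c < q ^ k * j"
  shows "x (q ^ k * t + c) = (subst_word \<zeta> ^^ k) (map x [t..<t + j]) ! c"
proof -
  define M where "M = t + j"
  define s where "s = subst_iter \<zeta> M 0"
  define u where "u = take t s"
  define v where "v = drop j (drop t s)"
  have tj: "t + j \<le> q ^ M"
    using less_q_power[of M] unfolding M_def by simp
  then have len: "length u = t"
    unfolding u_def s_def by (simp add: length_subst_iter)
  have u: "set u \<subseteq> {0,1}"
    unfolding u_def s_def by (meson order_trans set_take_subset set_subst_iter insertI1)
  have "s = take t s @ take j (drop t s) @ drop j (drop t s)"
    by (metis append_take_drop_id)
  also have "take j (drop t s) = map x [t..<t + j]"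
    unfolding s_def by (rule take_drop_subst_iter_fixpoint[OF tj])
  finally have s: "s = u @ map x [t..<t + j] @ v"
    unfolding u_def v_def .
  have "q ^ k * t + c < q ^ k * (t + j)"
    using assms by (simp add: algebra_simps)
  also have "\<dots> \<le> q ^ (k + M)"
    using tj by (simp add: power_add)
  finally have "x (q ^ k * t + c) = subst_iter \<zeta> (k + M) 0 ! (q ^ k * t + c)"
    by (rule fixpoint_nth)
  also have "\<dots> = (subst_word \<zeta> ^^ k) (u @ map x [t..<t + j] @ v) ! (q ^ k * length u + c)"
    unfolding len s[symmetric] s_def by (simp add: subst_iter_add)
  also have "\<dots> = (subst_word \<zeta> ^^ k) (map x [t..<t + j]) ! c"
    using assms by (intro nth_funpow_subst_word_factor u set_map_fixpoint) simp
  finally show ?thesis .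
qed

lemma factor_occurs_in_fixpoint:
  assumes "a \<in> {0,1}" and "is_factor w (subst_iter \<zeta> k a)"
  shows "\<exists>p. \<forall>r<length w. x (p + r) = w ! r"
proof -
  obtain K where "a \<in> set (subst_iter \<zeta> K 0)"
    using primitive assms(1) by (auto simp: primitive_subst_def)
  then have "is_factor [a] (subst_iter \<zeta> K 0)"
    by (simp add: is_factor_singleton_iff)
  then have "is_factor w (subst_iter \<zeta> (k + K) 0)"
    using assms(2) by (rule is_factor_subst_iter_compose)
  then obtain u v where uv: "subst_iter \<zeta> (k + K) 0 = u @ w @ v"
    by (auto simp: is_factor_def)
  have "x (length u + r) = w ! r" if "r < length w" for r
  proof -
    have "length u + r < q ^ (k + K)"
      using length_subst_iter[of 0 "k + K"] uv that by simp
    then show ?thesis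
      using fixpoint_nth uv that by (simp add: nth_append)
  qed
  then show ?thesis by blast
qed

lemma eventually_fixpoint_factor_of_subst_iter:
  "\<forall>\<^sub>F P in sequentially. \<forall>e\<in>{0,1}. is_factor (map x [t..<t + j]) (subst_iter \<zeta> P e)"
proof -
  obtain K where K: "\<And>e. e \<in> {0,1} \<Longrightarrow> 0 \<in> set (subst_iter \<zeta> K e)"
    using primitive by (auto simp: primitive_subst_def)
  define M where "M = t + j"
  have "t + j \<le> q ^ M"
    using less_q_power[of M] unfolding M_def by simp
  then have w: "is_factor (map x [t..<t + j]) (subst_iter \<zeta> M 0)"
    using is_factor_take_drop[of j t "subst_iter \<zeta> M 0"] by (simp only: take_drop_subst_iter_fixpoint)
  have factor: "is_factor (map x [t..<t + j]) (subst_iter \<zeta> (M + (d + K)) e)"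
    if "e \<in> {0,1}" for d e
  proof -
    have "0 < length (subst_iter \<zeta> d 0)"
      using length_subst_iter[of 0 d] q_ge_2 by simp
    then have "subst_iter \<zeta> d 0 ! 0 \<in> set (subst_iter \<zeta> d 0)"
      by (rule nth_mem)
    then have "is_factor [0] (subst_iter \<zeta> d 0)"
      using fixpoint_nth[of 0 d] fixpoint_0 q_ge_2 by (simp add: is_factor_singleton_iff)
    moreover have "is_factor [0] (subst_iter \<zeta> K e)"
      using K[OF that] by (simp add: is_factor_singleton_iff)
    ultimately have "is_factor [0] (subst_iter \<zeta> (d + K) e)"
      by (rule is_factor_subst_iter_compose[rotated])
    then show ?thesis
      using w by (rule is_factor_subst_iter_compose)
  qed
  show ?thesis
    unfolding eventually_sequentially
  proof (intro exI allI impI)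
    fix P assume "M + K \<le> P"
    then have P: "M + ((P - (M + K)) + K) = P"
      by simp
    show "\<forall>e\<in>{0,1}. is_factor (map x [t..<t + j]) (subst_iter \<zeta> P e)"
      using factor[of _ "P - (M + K)"] unfolding P by blast
  qed
qed

lemma two_letter_factors_of_subst_iter:
  obtains P where "\<And>t (e::nat). e \<in> {0,1} \<Longrightarrow> is_factor (map x [t..<t + 2]) (subst_iter \<zeta> P e)"
proof -
  let ?V = "range (\<lambda>t. map x [t..<t + 2])"
  have "?V \<subseteq> {w. set w \<subseteq> {0,1} \<and> length w = 2}"
    by (intro image_subsetI CollectI conjI set_map_fixpoint) simp
  then have "finite ?V"
    using finite_lists_length_eq[of "{0,1::nat}" 2] finite_subset by blast
  then have "\<forall>\<^sub>F P in sequentially. \<forall>w\<in>?V. \<forall>e\<in>{0,1}. is_factor w (subst_iter \<zeta> P e)"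
  proof (rule eventually_ball_finite, intro ballI)
    fix w assume "w \<in> ?V"
    then obtain t where w: "w = map x [t..<t + 2]"
      by blast
    show "\<forall>\<^sub>F P in sequentially. \<forall>e\<in>{0,1}. is_factor w (subst_iter \<zeta> P e)"
      unfolding w by (rule eventually_fixpoint_factor_of_subst_iter)
  qed
  then obtain P where P: "\<forall>P'\<ge>P. \<forall>w\<in>?V. \<forall>e\<in>{0,1}. is_factor w (subst_iter \<zeta> P' e)"
    unfolding eventually_sequentially ..
  show ?thesis
  proof (rule that)
    fix t and e :: nat assume "e \<in> {0,1}"
    then show "is_factor (map x [t..<t + 2]) (subst_iter \<zeta> P e)"
      using P by (meson order_refl rangeI)
  qed
qed

lemma fixpoint_factor_in_aligned_block:
  assumes P: "\<And>t (e::nat). e \<in> {0,1} \<Longrightarrow> is_factor (map x [t..<t + 2]) (subst_iter \<zeta> P e)"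
    and "m \<le> q ^ k"
  obtains p where "q ^ (k + P) * B \<le> p" and "p + m \<le> q ^ (k + P) * B + q ^ (k + P)"
    and "\<forall>r<m. x (p + r) = x (t + r)"
proof -
  define Q where "Q = q ^ k"
  define w where "w = map x [t div Q..<t div Q + 2]"
  obtain u v where uv: "subst_iter \<zeta> P (x B) = u @ w @ v"
    using P[OF fixpoint_binary] unfolding w_def is_factor_def by blast
  have u: "set u \<subseteq> {0,1}"
    using set_subst_iter[OF fixpoint_binary, of P B] uv by simp
  have "length u + 2 \<le> q ^ P"
    using length_subst_iter[OF fixpoint_binary, of P B] uv unfolding w_def by simp
  then have "Q * (length u + 2) \<le> Q * q ^ P"
    by (rule mult_le_mono2)
  then have room: "Q * length u + 2 * Q \<le> q ^ (k + P)"
    unfolding Q_def power_add by (simp add: algebra_simps)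
  have Q: "t mod Q < Q" "m \<le> Q"
    unfolding Q_def using q_ge_2 \<open>m \<le> q ^ k\<close> by simp_all
  define p where "p = q ^ (k + P) * B + Q * length u + t mod Q"
  have copy: "x (p + r) = x (t + r)" if "r < m" for r
  proof -
    have r: "t mod Q + r < Q * 2"
      using Q that by linarith
    have "x (p + r) = (subst_word \<zeta> ^^ (k + P)) [x B] ! (Q * length u + (t mod Q + r))"
      using fixpoint_block[of _ "k + P" 1 B] r room unfolding p_def by (simp add: add.assoc)
    also have "\<dots> = (subst_word \<zeta> ^^ k) (u @ w @ v) ! (Q * length u + (t mod Q + r))"
      using uv subst_iter_add[of \<zeta> k P "x B"] by (simp add: subst_iter_def)
    also have "\<dots> = (subst_word \<zeta> ^^ k) w ! (t mod Q + r)"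
      using r unfolding Q_def w_def
      by (intro nth_funpow_subst_word_factor u set_map_fixpoint) simp
    also have "\<dots> = x (Q * (t div Q) + (t mod Q + r))"
      using fixpoint_block[of "t mod Q + r" k 2 "t div Q"] r unfolding Q_def w_def by simp
    finally show ?thesis
      by simp
  qed
  moreover have "p + m \<le> q ^ (k + P) * B + q ^ (k + P)"
    using Q room unfolding p_def by linarith
  moreover have "q ^ (k + P) * B \<le> p"
    unfolding p_def by simp
  ultimately show ?thesis
    using that copy by blast
qed

lemma fixpoint_linearly_recurrent: "\<exists>C. linearly_recurrent x C"
proof -
  obtain P where P: "\<And>t (e::nat). e \<in> {0,1} \<Longrightarrow> is_factor (map x [t..<t + 2]) (subst_iter \<zeta> P e)"
    using two_letter_factors_of_subst_iter by blast
  have "\<exists>p. s \<le> p \<and> p + m \<le> s + 2 * q ^ Suc P * m \<and> (\<forall>r<m. x (p + r) = x (t + r))"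
    if "0 < m" for m t s
  proof -
    obtain k where k: "m \<le> q ^ k" "q ^ k \<le> q * m"
      using q_power_bracket[OF \<open>0 < m\<close>] .
    define QP where "QP = q ^ (k + P)"
    define B where "B = s div QP + 1"
    have "0 < QP"
      unfolding QP_def using q_ge_2 by simp
    then have "s mod QP < QP"
      by simp
    moreover have "QP * (s div QP) + s mod QP = s"
      by (rule mult_div_mod_eq)
    ultimately have B: "s < QP * B" "QP * B + QP \<le> s + 2 * QP"
      unfolding B_def distrib_left mult_1_right by linarith+
    have "QP \<le> q ^ Suc P * m"
      unfolding QP_def power_add using k(2) by (simp add: mult.commute mult_le_mono2)
    obtain p where "QP * B \<le> p" and "p + m \<le> QP * B + QP"
      and copy: "\<forall>r<m. x (p + r) = x (t + r)"
      using fixpoint_factor_in_aligned_block[OF P k(1)] unfolding QP_def by blast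
    with B \<open>QP \<le> q ^ Suc P * m\<close> have "s \<le> p" and "p + m \<le> s + 2 * q ^ Suc P * m"
      by linarith+
    with copy show ?thesis
      by blast
  qed
  then show ?thesis
    unfolding linearly_recurrent_def by blast
qed

lemma fixpoint_not_periodic:
  assumes "aperiodic_subst \<zeta>"
  shows "\<not> shift_periodic x"
proof
  assume "shift_periodic x"
  then obtain D where "0 < D" and D: "\<And>i. x (i + D) = x i"
    unfolding shift_periodic_def by blast
  obtain y where y: "y \<in> subshift \<zeta>" "\<not> shift_periodic y"
    using assms unfolding aperiodic_subst_def by blast
  have "y (i + D) = y i" for i
  proof -
    let ?w = "map y [i..<i + Suc D]"
    have "\<forall>i m. \<exists>k. \<exists>a\<in>{0,1}. is_factor (map y [i..<i + m]) (subst_iter \<zeta> k a)"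
      using y(1) unfolding subshift_def mem_Collect_eq by (rule conjunct2)
    then obtain k a where "a \<in> {0,1}" and "is_factor ?w (subst_iter \<zeta> k a)"
      by meson
    then obtain p where p: "\<forall>r<length ?w. x (p + r) = ?w ! r"
      by (meson factor_occurs_in_fixpoint)
    have "x p = y i" and "x (p + D) = y (i + D)"
      using p[rule_format, of 0] p[rule_format, of D] by (simp_all del: upt_Suc)
    then show ?thesis
      using D[of p] by simp
  qed
  then show False
    using y(2) \<open>0 < D\<close> unfolding shift_periodic_def by blast
qed

end

theorem lemma3p1:
  fixes \<zeta> :: "nat \<Rightarrow> nat list" and q :: nat and x :: "nat \<Rightarrow> nat"
  assumes "binary_subst \<zeta>"
    and "q \<ge> 2" and "const_length \<zeta> q"
    and "primitive_subst \<zeta>"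
    and "aperiodic_subst \<zeta>"
    and "hd (\<zeta> 0) = 0"
    and "is_fixpoint_limit \<zeta> x"
  shows "\<exists>c0 c :: real. 0 < c0 \<and> c0 \<le> 1 \<and> 1 \<le> c \<and>
    (\<forall>l n. l \<ge> 1 \<longrightarrow> n \<ge> 2 \<longrightarrow> inner_lines x l \<inter> ({1..<n} \<times> {1..<n}) \<noteq> {} \<longrightarrow>
       c0 / real l ^ 2 \<le> line_density x l n \<and> line_density x l n \<le> c / real l ^ 2)"
proof -
  interpret primitive_fixpoint \<zeta> q x
    using assms by unfold_locales auto
  obtain C where lr: "linearly_recurrent x C"
    using fixpoint_linearly_recurrent by blast
  have aper: "\<not> shift_periodic x"
    using assms(5) by (rule fixpoint_not_periodic)
  define K where "K = 72 * real C ^ 2"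
  define c where "c = real ((10 * C + 2) ^ 2)"
  have bounds: "1 / K / real l ^ 2 \<le> line_density x l n \<and> line_density x l n \<le> c / real l ^ 2"
    if l: "1 \<le> l" and n: "2 \<le> n" and ne: "inner_lines x l \<inter> ({1..<n} \<times> {1..<n}) \<noteq> {}"
    for l n
  proof -
    obtain i j where "(i, j) \<in> inner_lines x l \<inter> ({1..<n} \<times> {1..<n})"
      using ne by (metis equals0I surj_pair)
    then show ?thesis
      using line_density_bounds[OF lr aper l n] unfolding K_def c_def by blast
  qed
  have "1 \<le> real C"
    using linearly_recurrent_ge_1[OF lr] by simp
  then have "1 \<le> K"
    using one_le_power[of "real C" 2] unfolding K_def by linarith
  moreover have "1 \<le> c"
    unfolding c_def by simp
  ultimately show ?thesis
    using bounds by (intro exI[of _ "1 / K"] exI[of _ c]) simp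
qed

end
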